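(* Let $D\in\mathcal{R}$. Then $L^+(D)=N^+(D)$, where $L^+(D)=\{T\in\mathcal{R}: T<D,\ |T|>|D|$, and there is no $S\in\mathcal{R}$ with $T<S<D\}$.
   Context: Let $n\ge 1$ and $\Phi^+=\{(i,j)\in\mathbb{Z}^2:1\le j<i\le n\}$, with rows $\mathcal{R}_k=\{(k,s)\in\Phi^+\}$ and columns $\mathcal{C}_k=\{(r,k)\in\Phi^+\}$. A rook placement is a subset $D\subseteq\Phi^+$ with $|D\cap\mathcal{R}_k|\le1$ and $|D\cap\mathcal{C}_k|\le1$ for all $k$; $\mathcal{R}$ is the set of rook placements. For $D\in\mathcal{R}$, $R_D$ is the $n\times n$ integer matrix with $(R_D)_{i,j}=\#\{(a,b)\in D:a\ge i,\ b\le j\}$ for $i>j$ and $0$ otherwise; $D\le D'$ means $R_D\le R_{D'}$ entrywise. Order on $\Phi^+$: $(a,b)\le(c,d)$ iff $a\le c$ and $b\ge d$. For $(i,j)\in D$, $C_{(i,j)}(D)$ is the set of integer pairs $(\alpha,\beta)$ such that: $i>\beta\ge\alpha>j$; $D\cap\mathcal{R}_\alpha=\emptyset$ and $D\cap\mathcal{C}_\beta=\emptyset$; $D\cap\mathcal{R}_k\ne\emptyset$ and $D\cap\mathcal{C}_k\neq\emptyset$ for all $\alpha<k<\beta$; whenever $(p,q)\in D$, $(p,q)<(i,j)$ and $(p,q)\not<(\alpha,j)$, one has $(p,q)<(i,\beta)$; and if $\alpha\ne\beta$ then $D\cap\mathcal{R}_\beta\ne\emptyset$ and $D\cap\mathcal{C}_\alpha\ne\emptyset$.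 For $(\alpha,\beta)\in C_{(i,j)}(D)$ put $D^{\alpha,\beta}_{(i,j)}=(D\setminus\{(i,j)\})\cup\{(i,\beta),(\alpha,j)\}$, and let $N^+(D)$ be the set of all such $D^{\alpha,\beta}_{(i,j)}$ over $(i,j)\in D$ and $(\alpha,\beta)\in C_{(i,j)}(D)$. *)

theory Defs
  imports Main
begin

definition Phi :: "nat \<Rightarrow> (nat \<times> nat) set" where
  "Phi n = {(i, j). 1 \<le> j \<and> j < i \<and> i \<le> n}"

definition rowR :: "nat \<Rightarrow> nat \<Rightarrow> (nat \<times> nat) set" where
  "rowR n k = {p \<in> Phi n. fst p = k}"

definition colC :: "nat \<Rightarrow> nat \<Rightarrow> (nat \<times> nat) set" where
  "colC n k = {p \<in> Phi n. snd p = k}"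

definition rook :: "nat \<Rightarrow> (nat \<times> nat) set \<Rightarrow> bool" where
  "rook n D \<longleftrightarrow> D \<subseteq> Phi n \<and>
     (\<forall>k. card (D \<inter> rowR n k) \<le> 1 \<and> card (D \<inter> colC n k) \<le> 1)"

definition rankM :: "(nat \<times> nat) set \<Rightarrow> nat \<Rightarrow> nat \<Rightarrow> nat" where
  "rankM D i j = (if i > j then card {(a, b) \<in> D. a \<ge> i \<and> b \<le> j} else 0)"

definition rleq :: "nat \<Rightarrow> (nat \<times> nat) set \<Rightarrow> (nat \<times> nat) set \<Rightarrow> bool" where
  "rleq n D D' \<longleftrightarrow> (\<forall>i \<in> {1..n}. \<forall>j \<in> {1..n}. rankM D i j \<le> rankM D' i j)"

definition rless :: "nat \<Rightarrow> (nat \<times> nat) set \<Rightarrow> (nat \<times> nat) set \<Rightarrow> bool" where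
  "rless n D D' \<longleftrightarrow> rleq n D D' \<and> D \<noteq> D'"

definition pleq :: "nat \<times> nat \<Rightarrow> nat \<times> nat \<Rightarrow> bool" where
  "pleq p q \<longleftrightarrow> fst p \<le> fst q \<and> snd p \<ge> snd q"

definition pless :: "nat \<times> nat \<Rightarrow> nat \<times> nat \<Rightarrow> bool" where
  "pless p q \<longleftrightarrow> pleq p q \<and> p \<noteq> q"

definition Cset :: "nat \<Rightarrow> (nat \<times> nat) set \<Rightarrow> nat \<times> nat \<Rightarrow> (nat \<times> nat) set" where
  "Cset n D ij = (case ij of (i, j) \<Rightarrow>
     {(\<alpha>, \<beta>). i > \<beta> \<and> \<beta> \<ge> \<alpha> \<and> \<alpha> > j
        \<and> D \<inter> rowR n \<alpha> = {} \<and> D \<inter> colC n \<beta> = {}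
        \<and> (\<forall>k. \<alpha> < k \<and> k < \<beta> \<longrightarrow> D \<inter> rowR n k \<noteq> {} \<and> D \<inter> colC n k \<noteq> {})
        \<and> (\<forall>p \<in> D. pless p (i, j) \<and> \<not> pless p (\<alpha>, j) \<longrightarrow> pless p (i, \<beta>))
        \<and> (\<alpha> \<noteq> \<beta> \<longrightarrow> D \<inter> rowR n \<beta> \<noteq> {} \<and> D \<inter> colC n \<alpha> \<noteq> {})})"

definition Nplus :: "nat \<Rightarrow> (nat \<times> nat) set \<Rightarrow> (nat \<times> nat) set set" where
  "Nplus n D = {(D - {(i, j)}) \<union> {(i, \<beta>), (\<alpha>, j)} | i j \<alpha> \<beta>.
                 (i, j) \<in> D \<and> (\<alpha>, \<beta>) \<in> Cset n D (i, j)}"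

definition Lplus :: "nat \<Rightarrow> (nat \<times> nat) set \<Rightarrow> (nat \<times> nat) set set" where
  "Lplus n D = {T. rook n T \<and> rless n T D \<and> card T > card D \<and>
                 \<not> (\<exists>S. rook n S \<and> rless n T S \<and> rless n S D)}"

end

theory Submission
  imports Defs
begin

text \<open>Rank matrices are compared through box counts: for \<open>y < x\<close> the entry \<open>(R_D)_{x,y}\<close>
  counts the rooks of \<open>D\<close> in rows \<open>\<ge> x\<close> and columns \<open>\<le> y\<close>, and four neighbouring counts
  determine whether \<open>(x, y) \<in> D\<close>.

  Splitting \<open>(i, j)\<close> into \<open>(i, \<beta>)\<close> and \<open>(\<alpha>, j)\<close> lowers the counts by one exactly on the
  boxes with corner in \<open>(\<alpha>, i] \<times> [j, \<beta>)\<close>. A placement \<open>S\<close> between the split and \<open>D\<close> agrees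
  with \<open>D\<close> off the rectangle spanned by \<open>(\<alpha>, j)\<close> and \<open>(i, \<beta>)\<close>; the conditions defining
  \<open>C_{(i,j)}(D)\<close> leave inside it only the rooks of the split or \<open>(i, j)\<close> itself.

  Conversely, let \<open>T\<close> be covered by \<open>D\<close> with more rooks, and let \<open>(i, j)\<close> be the leftmost
  entry of the lowest row where the rank matrices differ; it is a rook of \<open>D\<close> missing from
  \<open>T\<close>. Moving the rooks of \<open>T\<close> nearest to \<open>(i, j)\<close> towards it gives \<open>T < S \<le> D\<close>, hence
  \<open>S = D\<close>. Counting rooks, this is only possible if \<open>T\<close> is a split of \<open>(i, j)\<close>, and each
  violated condition of \<open>C_{(i,j)}(D)\<close> would produce a placement strictly between \<open>T\<close> and
  \<open>D\<close>.\<close>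

subsection \<open>Rook placements\<close>

lemma finite_Phi: "finite (Phi n)"
  by (rule finite_subset[of _ "{1..n} \<times> {1..n}"]) (auto simp: Phi_def)

lemma card_fiber_le_1_iff:
  "finite S \<Longrightarrow> (\<forall>k. card {p \<in> S. f p = k} \<le> 1) \<longleftrightarrow> (\<forall>p\<in>S. \<forall>q\<in>S. f p = f q \<longrightarrow> p = q)"
  by (simp add: card_le_Suc0_iff_eq) blast

lemma rook_iff: "rook n S \<longleftrightarrow> S \<subseteq> Phi n \<and>
   (\<forall>p\<in>S. \<forall>q\<in>S. fst p = fst q \<longrightarrow> p = q) \<and> (\<forall>p\<in>S. \<forall>q\<in>S. snd p = snd q \<longrightarrow> p = q)"
proof (cases "S \<subseteq> Phi n")
  case True
  then have "S \<inter> rowR n k = {p \<in> S. fst p = k}" "S \<inter> colC n k = {p \<in> S. snd p = k}" for k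
    by (auto simp: rowR_def colC_def)
  moreover have "finite S"
    using True finite_Phi finite_subset by blast
  ultimately show ?thesis
    using card_fiber_le_1_iff[of S fst] card_fiber_le_1_iff[of S snd]
    by (simp add: rook_def all_conj_distrib True)
qed (simp add: rook_def)

lemma rook_Phi: "rook n S \<Longrightarrow> S \<subseteq> Phi n"
  by (simp add: rook_def)

lemma rook_finite: "rook n S \<Longrightarrow> finite S"
  using finite_Phi finite_subset by (auto simp: rook_def)

lemma rook_same_row: "rook n S \<Longrightarrow> p \<in> S \<Longrightarrow> q \<in> S \<Longrightarrow> fst p = fst q \<Longrightarrow> p = q"
  by (auto simp: rook_iff)

lemma rook_same_col: "rook n S \<Longrightarrow> p \<in> S \<Longrightarrow> q \<in> S \<Longrightarrow> snd p = snd q \<Longrightarrow> p = q"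
  by (auto simp: rook_iff)

lemma rook_subset: "rook n S \<Longrightarrow> A \<subseteq> S \<Longrightarrow> rook n A"
  unfolding rook_iff by (meson subset_trans subsetD)

lemma rook_insert:
  assumes "rook n S" "p \<in> Phi n" "\<forall>q\<in>S. fst q \<noteq> fst p \<and> snd q \<noteq> snd p"
  shows "rook n (insert p S)"
  using assms unfolding rook_iff by (metis insert_iff insert_subset)

lemma Phi_iff [simp]: "(x, y) \<in> Phi n \<longleftrightarrow> 1 \<le> y \<and> y < x \<and> x \<le> n"
  by (simp add: Phi_def)

lemma row_empty_iff: "D \<subseteq> Phi n \<Longrightarrow> D \<inter> rowR n k = {} \<longleftrightarrow> (\<forall>p\<in>D. fst p \<noteq> k)"
  by (auto simp: rowR_def)

lemma col_empty_iff: "D \<subseteq> Phi n \<Longrightarrow> D \<inter> colC n k = {} \<longleftrightarrow> (\<forall>p\<in>D. snd p \<noteq> k)"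
  by (auto simp: colC_def)

subsection \<open>Counting rooks in south-west boxes\<close>

text \<open>Unlike \<open>rankM\<close>, which is \<open>0\<close> on and above the diagonal, box counts are meaningful
  for all \<open>x, y\<close>.\<close>

definition box :: "nat \<Rightarrow> nat \<Rightarrow> (nat \<times> nat) set" where
  "box x y = {p. x \<le> fst p \<and> snd p \<le> y}"

definition box_count :: "(nat \<times> nat) set \<Rightarrow> nat \<Rightarrow> nat \<Rightarrow> nat" where
  "box_count S x y = card (S \<inter> box x y)"

definition box_ind :: "nat \<times> nat \<Rightarrow> nat \<Rightarrow> nat \<Rightarrow> nat" where
  "box_ind p x y = of_bool (x \<le> fst p \<and> snd p \<le> y)"

definition box_le :: "(nat \<times> nat) set \<Rightarrow> (nat \<times> nat) set \<Rightarrow> bool" where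
  "box_le A B \<longleftrightarrow> (\<forall>x y. y < x \<longrightarrow> box_count A x y \<le> box_count B x y)"

lemma box_count_empty [simp]: "box_count {} x y = 0"
  by (simp add: box_count_def)

lemma box_count_insert [simp]:
  "finite A \<Longrightarrow> p \<notin> A \<Longrightarrow> box_count (insert p A) x y = box_ind p x y + box_count A x y"
  unfolding box_count_def box_ind_def box_def by (auto simp: Int_insert_left)

lemma box_count_beyond: "S \<subseteq> Phi n \<Longrightarrow> n < x \<Longrightarrow> box_count S x y = 0"
  unfolding box_count_def box_def Phi_def by (rule card_eq_0_iff[THEN iffD2]) auto

lemma box_count_col0: "S \<subseteq> Phi n \<Longrightarrow> box_count S x 0 = 0"
  unfolding box_count_def box_def Phi_def by (rule card_eq_0_iff[THEN iffD2]) auto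

lemma rankM_eq_box_count: "y < x \<Longrightarrow> rankM S x y = box_count S x y"
  unfolding rankM_def box_count_def box_def by (auto intro!: arg_cong[where f = card])

lemma rleq_iff_box_le:
  assumes "A \<subseteq> Phi n" "B \<subseteq> Phi n"
  shows "rleq n A B \<longleftrightarrow> box_le A B"
proof
  assume r: "rleq n A B"
  show "box_le A B" unfolding box_le_def
  proof (intro allI impI)
    fix x y :: nat assume "y < x"
    then consider "n < x \<or> y = 0" | "x \<in> {1..n}" "y \<in> {1..n}" by fastforce
    then show "box_count A x y \<le> box_count B x y"
    proof cases
      case 1 then show ?thesis using box_count_beyond[OF assms(1)] box_count_col0[OF assms(1)] by auto
    next
      case 2
      then have "rankM A x y \<le> rankM B x y" using r by (simp add: rleq_def)
      then show ?thesis using \<open>y < x\<close> by (simp add: rankM_eq_box_count)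
    qed
  qed
next
  assume "box_le A B"
  then show "rleq n A B"
    unfolding rleq_def box_le_def by (auto simp: rankM_def rankM_eq_box_count[symmetric])
qed

lemma box_count_exchange:
  assumes "finite T" "P \<subseteq> T" "Q \<inter> T = {}" "finite Q"
  shows "box_count (T - P \<union> Q) x y + box_count P x y = box_count T x y + box_count Q x y"
proof -
  let ?B = "box x y"
  have "card ((T - P \<union> Q) \<inter> ?B) = card (T \<inter> ?B - P \<inter> ?B) + card (Q \<inter> ?B)"
    using assms by (subst card_Un_disjoint[symmetric]) (auto intro!: arg_cong[where f = card])
  moreover have "card (T \<inter> ?B - P \<inter> ?B) = card (T \<inter> ?B) - card (P \<inter> ?B)"
    using assms by (intro card_Diff_subset) (auto intro: finite_subset)
  moreover have "card (P \<inter> ?B) \<le> card (T \<inter> ?B)"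
    using assms by (intro card_mono) auto
  ultimately show ?thesis
    unfolding box_count_def by simp
qed

lemma card_exchange:
  assumes "finite T" "P \<subseteq> T" "Q \<inter> T = {}" "finite Q"
  shows "card (T - P \<union> Q) + card P = card T + card Q"
proof -
  have "card (T - P \<union> Q) = card (T - P) + card Q"
    using assms by (intro card_Un_disjoint) auto
  moreover have "card (T - P) = card T - card P"
    using assms by (intro card_Diff_subset) (auto intro: finite_subset)
  moreover have "card P \<le> card T"
    using assms by (intro card_mono) auto
  ultimately show ?thesis by simp
qed

lemma box_count_row_split:
  "finite S \<Longrightarrow> box_count S x y = box_count S (Suc x) y + card {p \<in> S. fst p = x \<and> snd p \<le> y}"
  unfolding box_count_def
  by (subst card_Un_disjoint[symmetric]) (auto simp: box_def intro!: arg_cong[where f = card])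

lemma box_count_col_split:
  "finite S \<Longrightarrow> z \<le> y \<Longrightarrow>
    box_count S x y = box_count S x z + card {p \<in> S. x \<le> fst p \<and> z < snd p \<and> snd p \<le> y}"
  unfolding box_count_def
  by (subst card_Un_disjoint[symmetric]) (auto simp: box_def intro!: arg_cong[where f = card])

lemma box_count_corner:
  assumes "finite S" "1 \<le> y"
  shows "box_count S x y + box_count S (Suc x) (y - 1)
       = box_count S (Suc x) y + box_count S x (y - 1) + of_bool ((x, y) \<in> S)"
proof -
  have "{p \<in> S. fst p = x \<and> snd p \<le> y} = {p \<in> S. fst p = x \<and> snd p \<le> y - 1} \<union> ({(x, y)} \<inter> S)"
    using assms(2) by auto
  also have "card \<dots> = card {p \<in> S. fst p = x \<and> snd p \<le> y - 1} + card ({(x, y)} \<inter> S)"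
    using assms by (intro card_Un_disjoint) auto
  finally have "card {p \<in> S. fst p = x \<and> snd p \<le> y}
      = card {p \<in> S. fst p = x \<and> snd p \<le> y - 1} + of_bool ((x, y) \<in> S)"
    by auto
  then show ?thesis
    using box_count_row_split[OF assms(1), of x y] box_count_row_split[OF assms(1), of x "y - 1"]
    by simp
qed

lemma mem_iff_of_box_counts_eq:
  assumes "finite A" "finite B" "1 \<le> y"
    and "box_count A x y = box_count B x y" "box_count A (Suc x) y = box_count B (Suc x) y"
    and "box_count A x (y - 1) = box_count B x (y - 1)"
    and "box_count A (Suc x) (y - 1) = box_count B (Suc x) (y - 1)"
  shows "(x, y) \<in> A \<longleftrightarrow> (x, y) \<in> B"
  using box_count_corner[OF assms(1,3), of x] box_count_corner[OF assms(2,3), of x] assms(4-7)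
  by (simp add: of_bool_eq_iff)

lemma mem_iff_of_box_counts_eq_below:
  assumes "A \<subseteq> Phi n" "B \<subseteq> Phi n"
    and eq: "\<And>x' y'. y' < x' \<Longrightarrow> x \<le> x' \<Longrightarrow> box_count A x' y' = box_count B x' y'"
  shows "(x, y) \<in> A \<longleftrightarrow> (x, y) \<in> B"
proof (cases "1 \<le> y \<and> y < x")
  case True
  have "finite A" "finite B"
    using assms(1,2) by (auto intro: finite_subset[OF _ finite_Phi])
  then show ?thesis
    using True by (intro mem_iff_of_box_counts_eq) (auto intro: eq)
qed (use assms(1,2) in auto)

lemma box_count_Diff_Int: "finite A \<Longrightarrow> box_count A x y = box_count (A - R) x y + box_count (A \<inter> R) x y"
  unfolding box_count_def by (subst card_Un_disjoint[symmetric]) (auto intro!: arg_cong[where f = card])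

lemma box_count_pos_obtain:
  assumes "1 \<le> box_count A x y"
  obtains p where "p \<in> A" "x \<le> fst p" "snd p \<le> y"
proof -
  have "A \<inter> box x y \<noteq> {}"
    using assms unfolding box_count_def by (metis card.empty not_one_le_zero)
  then show ?thesis using that by (auto simp: box_def)
qed

lemma box_count_le_1_unique:
  assumes "finite A" "box_count A x y \<le> 1" "p \<in> A" "q \<in> A"
    and "x \<le> fst p" "snd p \<le> y" "x \<le> fst q" "snd q \<le> y"
  shows "p = q"
proof -
  have "p \<in> A \<inter> box x y" "q \<in> A \<inter> box x y"
    using assms by (auto simp: box_def)
  then show ?thesis
    using assms(1,2) card_le_Suc0_iff_eq[of "A \<inter> box x y"] by (auto simp: box_count_def)
qed

subsection \<open>Splitting a rook\<close>

definition rook_split :: "(nat \<times> nat) set \<Rightarrow> nat \<Rightarrow> nat \<Rightarrow> nat \<Rightarrow> nat \<Rightarrow> (nat \<times> nat) set" where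
  "rook_split D i j \<alpha> \<beta> = D - {(i, j)} \<union> {(i, \<beta>), (\<alpha>, j)}"

lemma Nplus_eq:
  "Nplus n D = {rook_split D i j \<alpha> \<beta> | i j \<alpha> \<beta>. (i, j) \<in> D \<and> (\<alpha>, \<beta>) \<in> Cset n D (i, j)}"
  by (simp add: Nplus_def rook_split_def)

lemma rook_rook_split:
  assumes D: "rook n D" "(i, j) \<in> D"
    and "j < \<alpha>" "\<alpha> < i" "j < \<beta>" "\<beta> < i" "\<forall>p\<in>D. fst p \<noteq> \<alpha>" "\<forall>p\<in>D. snd p \<noteq> \<beta>"
  shows "rook n (rook_split D i j \<alpha> \<beta>)"
proof -
  have "1 \<le> j" "i \<le> n"
    using rook_Phi[OF D(1)] D(2) by auto
  have row_i: "p \<in> D \<Longrightarrow> fst p = i \<Longrightarrow> p = (i, j)" and col_j: "p \<in> D \<Longrightarrow> snd p = j \<Longrightarrow> p = (i, j)" for p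
    using rook_same_row[OF D(1) _ D(2)] rook_same_col[OF D(1) _ D(2)] by auto
  have "rook n (D - {(i, j)})"
    using rook_subset[OF D(1)] by blast
  moreover have "\<forall>q\<in>D - {(i, j)}. fst q \<noteq> \<alpha> \<and> snd q \<noteq> j"
    using col_j assms(7) by blast
  ultimately have "rook n (insert (\<alpha>, j) (D - {(i, j)}))"
    using assms(3,4) \<open>1 \<le> j\<close> \<open>i \<le> n\<close> by (simp add: rook_insert)
  moreover have "\<forall>q\<in>insert (\<alpha>, j) (D - {(i, j)}). fst q \<noteq> i \<and> snd q \<noteq> \<beta>"
    using row_i assms(4,5,8) by fastforce
  ultimately have "rook n (insert (i, \<beta>) (insert (\<alpha>, j) (D - {(i, j)})))"
    using assms(3,5,6) \<open>1 \<le> j\<close> \<open>i \<le> n\<close> by (simp add: rook_insert)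
  then show ?thesis
    by (simp add: rook_split_def)
qed

lemma box_count_rook_split:
  assumes "finite D" "(i, j) \<in> D" "\<alpha> < i" "\<forall>p\<in>D. fst p \<noteq> \<alpha>" "\<forall>p\<in>D. snd p \<noteq> \<beta>"
  shows "box_count (rook_split D i j \<alpha> \<beta>) x y + box_ind (i, j) x y
       = box_count D x y + box_ind (i, \<beta>) x y + box_ind (\<alpha>, j) x y"
proof -
  have "box_count (rook_split D i j \<alpha> \<beta>) x y + box_count {(i, j)} x y
      = box_count D x y + box_count {(i, \<beta>), (\<alpha>, j)} x y"
    unfolding rook_split_def by (rule box_count_exchange) (use assms in auto)
  then show ?thesis
    using assms(3) by simp
qed

lemma card_rook_split:
  assumes "finite D" "(i, j) \<in> D" "\<alpha> < i" "\<forall>p\<in>D. fst p \<noteq> \<alpha>" "\<forall>p\<in>D. snd p \<noteq> \<beta>"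
  shows "card (rook_split D i j \<alpha> \<beta>) = Suc (card D)"
proof -
  have "card (rook_split D i j \<alpha> \<beta>) + card {(i, j)} = card D + card {(i, \<beta>), (\<alpha>, j)}"
    unfolding rook_split_def by (rule card_exchange) (use assms in auto)
  then show ?thesis
    using assms(3) by simp
qed

lemma box_le_rook_split:
  assumes "finite D" "(i, j) \<in> D" "j < \<alpha>" "\<alpha> \<le> \<beta>" "\<beta> < i"
    and "\<forall>p\<in>D. fst p \<noteq> \<alpha>" "\<forall>p\<in>D. snd p \<noteq> \<beta>"
  shows "box_le (rook_split D i j \<alpha> \<beta>) D"
  unfolding box_le_def
proof (intro allI impI)
  fix x y :: nat assume "y < x"
  then have "box_ind (i, \<beta>) x y + box_ind (\<alpha>, j) x y \<le> box_ind (i, j) x y"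
    using assms(3-5) by (auto simp: box_ind_def)
  then show "box_count (rook_split D i j \<alpha> \<beta>) x y \<le> box_count D x y"
    using box_count_rook_split[OF assms(1,2) _ assms(6,7), of x y] assms(4,5) by linarith
qed

lemma corner_notin_rook_split: "\<alpha> \<noteq> i \<Longrightarrow> \<beta> \<noteq> j \<Longrightarrow> (i, j) \<notin> rook_split D i j \<alpha> \<beta>"
  by (auto simp: rook_split_def)

definition rook_swap :: "(nat \<times> nat) set \<Rightarrow> nat \<Rightarrow> nat \<Rightarrow> nat \<Rightarrow> nat \<Rightarrow> (nat \<times> nat) set" where
  "rook_swap D i j c d = D - {(i, j), (c, d)} \<union> {(i, d), (c, j)}"

lemma rook_rook_swap:
  assumes D: "rook n D" "(i, j) \<in> D" "(c, d) \<in> D" and "c \<noteq> i" "d \<noteq> j" "d < i" "j < c"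
  shows "rook n (rook_swap D i j c d)"
proof -
  let ?R = "D - {(i, j), (c, d)}"
  have "1 \<le> j" "i \<le> n" "1 \<le> d" "c \<le> n"
    using rook_Phi[OF D(1)] D(2,3) by auto
  have "fst q \<notin> {i, c} \<and> snd q \<notin> {j, d}" if "q \<in> ?R" for q
  proof -
    have q: "q \<in> D" "q \<noteq> (i, j)" "q \<noteq> (c, d)"
      using that by auto
    show ?thesis
      using rook_same_row[OF D(1) q(1) D(2)] rook_same_row[OF D(1) q(1) D(3)]
        rook_same_col[OF D(1) q(1) D(2)] rook_same_col[OF D(1) q(1) D(3)] q(2,3) by auto
  qed
  moreover have "rook n ?R"
    using rook_subset[OF D(1)] by blast
  ultimately have "rook n (insert (c, j) ?R)"
    using assms(7) \<open>1 \<le> j\<close> \<open>c \<le> n\<close> by (simp add: rook_insert)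
  moreover have "\<forall>q\<in>insert (c, j) ?R. fst q \<noteq> i \<and> snd q \<noteq> d"
    using \<open>\<And>q. q \<in> ?R \<Longrightarrow> fst q \<notin> {i, c} \<and> snd q \<notin> {j, d}\<close> assms(4,5) by auto
  ultimately have "rook n (insert (i, d) (insert (c, j) ?R))"
    using assms(6) \<open>1 \<le> d\<close> \<open>i \<le> n\<close> by (simp add: rook_insert)
  then show ?thesis
    by (simp add: rook_swap_def)
qed

lemma rook_swap_new_notin:
  assumes "rook n D" "(i, j) \<in> D" "(c, d) \<in> D" "c \<noteq> i" "d \<noteq> j"
  shows "(i, d) \<notin> D" "(c, j) \<notin> D"
  using rook_same_row[OF assms(1) _ assms(2), of "(i, d)"] rook_same_col[OF assms(1) _ assms(2), of "(c, j)"]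
    assms(4,5) by auto

lemma box_count_rook_swap:
  assumes "rook n D" "(i, j) \<in> D" "(c, d) \<in> D" "c \<noteq> i" "d \<noteq> j"
  shows "box_count (rook_swap D i j c d) x y + box_ind (i, j) x y + box_ind (c, d) x y
       = box_count D x y + box_ind (i, d) x y + box_ind (c, j) x y"
proof -
  have "box_count (rook_swap D i j c d) x y + box_count {(i, j), (c, d)} x y
      = box_count D x y + box_count {(i, d), (c, j)} x y"
    unfolding rook_swap_def
    using rook_finite[OF assms(1)] assms(2,3) rook_swap_new_notin[OF assms]
    by (intro box_count_exchange) auto
  then show ?thesis
    using assms(4) by (simp add: add.assoc)
qed

lemma card_rook_swap:
  assumes "rook n D" "(i, j) \<in> D" "(c, d) \<in> D" "c \<noteq> i" "d \<noteq> j"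
  shows "card (rook_swap D i j c d) = card D"
proof -
  have "card (rook_swap D i j c d) + card {(i, j), (c, d)} = card D + card {(i, d), (c, j)}"
    unfolding rook_swap_def
    using rook_finite[OF assms(1)] assms(2,3) rook_swap_new_notin[OF assms]
    by (intro card_exchange) auto
  then show ?thesis
    using assms(4) by simp
qed

lemma box_le_rook_swap:
  assumes "rook n D" "(i, j) \<in> D" "(c, d) \<in> D" "c \<noteq> i" "d \<noteq> j" "c \<le> i" "j \<le> d"
  shows "box_le (rook_swap D i j c d) D"
  unfolding box_le_def
proof (intro allI impI)
  fix x y :: nat
  have "box_ind (i, d) x y + box_ind (c, j) x y \<le> box_ind (i, j) x y + box_ind (c, d) x y"
    using assms(6,7) by (auto simp: box_ind_def)
  then show "box_count (rook_swap D i j c d) x y \<le> box_count D x y"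
    using box_count_rook_swap[OF assms(1-5), of x y] by linarith
qed

subsection \<open>Admissible splits are covered by the placement\<close>

locale admissible_split =
  fixes n :: nat and D :: "(nat \<times> nat) set" and i j \<alpha> \<beta> :: nat
  assumes rook_D: "rook n D" and corner: "(i, j) \<in> D" and admissible: "(\<alpha>, \<beta>) \<in> Cset n D (i, j)"
begin

abbreviation T :: "(nat \<times> nat) set" where
  "T \<equiv> rook_split D i j \<alpha> \<beta>"

definition rect :: "(nat \<times> nat) set" where
  "rect = {p. \<alpha> \<le> fst p \<and> fst p \<le> i \<and> j \<le> snd p \<and> snd p \<le> \<beta>}"

lemma bounds: "j < \<alpha>" "\<alpha> \<le> \<beta>" "\<beta> < i"
  using admissible by (auto simp: Cset_def)

lemma row_\<alpha>_free: "\<forall>p\<in>D. fst p \<noteq> \<alpha>" and col_\<beta>_free: "\<forall>p\<in>D. snd p \<noteq> \<beta>"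
  using admissible row_empty_iff[OF rook_Phi[OF rook_D]] col_empty_iff[OF rook_Phi[OF rook_D]]
  by (auto simp: Cset_def)

lemma row_occupied: "\<alpha> < k \<Longrightarrow> k \<le> \<beta> \<Longrightarrow> \<exists>p\<in>D. fst p = k"
  using admissible row_empty_iff[OF rook_Phi[OF rook_D], of k]
  by (cases "k = \<beta>") (auto simp: Cset_def)

lemma col_occupied: "\<alpha> \<le> k \<Longrightarrow> k < \<beta> \<Longrightarrow> \<exists>p\<in>D. snd p = k"
  using admissible col_empty_iff[OF rook_Phi[OF rook_D], of k]
  by (cases "k = \<alpha>") (auto simp: Cset_def)

lemma finite_D: "finite D"
  using rook_finite[OF rook_D] .

lemma rook_T: "rook n T"
  using rook_rook_split[OF rook_D corner] bounds row_\<alpha>_free col_\<beta>_free by simp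

lemma card_T: "card T = Suc (card D)"
  using card_rook_split[OF finite_D corner] bounds row_\<alpha>_free col_\<beta>_free by simp

lemma box_count_T:
  "box_count T x y + box_ind (i, j) x y = box_count D x y + box_ind (i, \<beta>) x y + box_ind (\<alpha>, j) x y"
  using box_count_rook_split[OF finite_D corner] bounds row_\<alpha>_free col_\<beta>_free by simp

lemma T_box_le_D: "box_le T D"
  using box_le_rook_split[OF finite_D corner bounds row_\<alpha>_free col_\<beta>_free] .

lemma corner_notin_T: "(i, j) \<notin> T"
  using bounds by (intro corner_notin_rook_split) auto

text \<open>This is where the box condition of \<open>Cset\<close> is used.\<close>

lemma D_Int_rect: "D \<inter> rect = {(i, j)}"
proof
  show "{(i, j)} \<subseteq> D \<inter> rect"
    using corner bounds by (auto simp: rect_def)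
  show "D \<inter> rect \<subseteq> {(i, j)}"
  proof (rule subsetI, rule ccontr)
    fix p assume p: "p \<in> D \<inter> rect" and "p \<notin> {(i, j)}"
    then have "fst p \<noteq> \<alpha>" "snd p \<noteq> \<beta>" "pless p (i, j)" "\<not> pless p (\<alpha>, j)"
      using row_\<alpha>_free col_\<beta>_free by (auto simp: rect_def pless_def pleq_def)
    then have "pless p (i, \<beta>)"
      using admissible p by (auto simp: Cset_def)
    then show False
      using p \<open>snd p \<noteq> \<beta>\<close> by (auto simp: rect_def pless_def pleq_def)
  qed
qed

end

locale split_between = admissible_split +
  fixes S :: "(nat \<times> nat) set"
  assumes rook_S: "rook n S" and T_le_S: "box_le T S" and S_le_D: "box_le S D"
begin

lemma finite_S: "finite S"
  using rook_finite[OF rook_S] .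

text \<open>Off the rectangle the splitting does not change the box counts, so any \<open>S\<close> squeezed
  between \<open>T\<close> and \<open>D\<close> has the box counts of \<open>D\<close> there.\<close>

lemma box_count_off_rect:
  assumes "y < x" "(x \<le> \<alpha> \<and> y < \<beta>) \<or> i < x \<or> y < j \<or> \<beta> \<le> y"
  shows "box_count S x y = box_count D x y"
proof -
  have "box_ind (i, j) x y = box_ind (i, \<beta>) x y + box_ind (\<alpha>, j) x y"
    using assms bounds by (auto simp: box_ind_def)
  then have "box_count T x y = box_count D x y"
    using box_count_T[of x y] by simp
  then show ?thesis
    using T_le_S S_le_D assms(1) unfolding box_le_def by (metis le_antisym)
qed

lemma S_minus_rect: "S - rect = D - rect"
proof -
  have "(x, y) \<in> S \<longleftrightarrow> (x, y) \<in> D" if "1 \<le> y" "y < x" "(x, y) \<notin> rect" for x y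
  proof (rule mem_iff_of_box_counts_eq[OF finite_S finite_D \<open>1 \<le> y\<close>])
    have "x < \<alpha> \<or> i < x \<or> y < j \<or> \<beta> < y"
      using that(3) by (auto simp: rect_def)
    then show "box_count S x y = box_count D x y" "box_count S (Suc x) y = box_count D (Suc x) y"
      "box_count S x (y - 1) = box_count D x (y - 1)"
      "box_count S (Suc x) (y - 1) = box_count D (Suc x) (y - 1)"
      using that(1,2) bounds by (auto intro!: box_count_off_rect)
  qed
  moreover have "S \<subseteq> Phi n" "D \<subseteq> Phi n"
    using rook_Phi rook_S rook_D by auto
  ultimately show ?thesis
    by (auto simp: Phi_def)
qed

lemma other_D_rooks_in_S: "q \<in> D \<Longrightarrow> q \<noteq> (i, j) \<Longrightarrow> q \<in> S \<and> q \<notin> rect"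
  using S_minus_rect D_Int_rect by blast

lemma box_count_S_Int_rect:
  "box_count S x y + box_ind (i, j) x y = box_count D x y + box_count (S \<inter> rect) x y"
  using box_count_Diff_Int[OF finite_S, of x y rect] box_count_Diff_Int[OF finite_D, of x y rect]
  by (simp add: S_minus_rect D_Int_rect)

lemma rect_rook_shape:
  assumes p: "p \<in> S \<inter> rect"
  shows "fst p = \<alpha> \<or> \<beta> < fst p" "snd p < \<alpha> \<or> snd p = \<beta>"
proof -
  have q_ne: "q \<noteq> (i, j)" if "fst q = fst p \<and> fst p \<le> \<beta> \<or> snd q = snd p \<and> \<alpha> \<le> snd p" for q
    using that p bounds by (auto simp: rect_def)
  show "fst p = \<alpha> \<or> \<beta> < fst p"
  proof (rule ccontr)
    assume "\<not> (fst p = \<alpha> \<or> \<beta> < fst p)"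
    then obtain q where "q \<in> D" "fst q = fst p" "fst p \<le> \<beta>"
      using row_occupied[of "fst p"] p by (force simp: rect_def)
    then have "q \<in> S" "q \<noteq> p"
      using other_D_rooks_in_S q_ne p by blast+
    then show False
      using rook_same_row[OF rook_S] p \<open>fst q = fst p\<close> by blast
  qed
  show "snd p < \<alpha> \<or> snd p = \<beta>"
  proof (rule ccontr)
    assume "\<not> (snd p < \<alpha> \<or> snd p = \<beta>)"
    then obtain q where "q \<in> D" "snd q = snd p" "\<alpha> \<le> snd p"
      using col_occupied[of "snd p"] p by (force simp: rect_def)
    then have "q \<in> S" "q \<noteq> p"
      using other_D_rooks_in_S q_ne p by blast+
    then show False
      using rook_same_col[OF rook_S] p \<open>snd q = snd p\<close> by blast
  qed
qed

lemma rect_rook_left_or_low: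
  assumes "p \<in> S \<inter> rect"
  shows "snd p < \<alpha> \<or> \<beta> < fst p"
proof (cases "\<beta> < fst p")
  case False
  then have "fst p = \<alpha>"
    using rect_rook_shape(1)[OF assms] by auto
  moreover have "snd p < fst p"
    using assms rook_Phi[OF rook_S] by (cases p) auto
  ultimately show ?thesis
    by simp
qed simp

text \<open>The boxes with corners \<open>(\<alpha>, \<alpha> - 1)\<close> and \<open>(\<beta> + 1, \<beta>)\<close> hold at most one rook of
  \<open>S\<close> in the rectangle each, the boxes at \<open>(\<alpha>, j)\<close> and \<open>(i, \<beta>)\<close> at least one.\<close>

lemma box_count_S_Int_rect_le_1:
  assumes "y < x"
  shows "box_count (S \<inter> rect) x y \<le> 1"
proof -
  have "box_count S x y \<le> box_count D x y"
    using S_le_D assms by (simp add: box_le_def)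
  moreover have "box_ind (i, j) x y \<le> 1"
    by (simp add: box_ind_def)
  ultimately show ?thesis
    using box_count_S_Int_rect[of x y] by linarith
qed

lemma rect_rook_unique_left:
  assumes "p \<in> S \<inter> rect" "q \<in> S \<inter> rect" "snd p < \<alpha>" "snd q < \<alpha>"
  shows "p = q"
proof (rule box_count_le_1_unique[where A = "S \<inter> rect" and x = \<alpha> and y = "\<alpha> - 1"])
  show "box_count (S \<inter> rect) \<alpha> (\<alpha> - 1) \<le> 1"
    using bounds by (intro box_count_S_Int_rect_le_1) simp
  show "\<alpha> \<le> fst p" "\<alpha> \<le> fst q"
    using assms(1,2) by (simp_all add: rect_def)
qed (use assms finite_S in simp_all)

lemma rect_rook_unique_low:
  assumes "p \<in> S \<inter> rect" "q \<in> S \<inter> rect" "\<beta> < fst p" "\<beta> < fst q"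
  shows "p = q"
proof (rule box_count_le_1_unique[where A = "S \<inter> rect" and x = "Suc \<beta>" and y = \<beta>])
  show "box_count (S \<inter> rect) (Suc \<beta>) \<beta> \<le> 1"
    by (intro box_count_S_Int_rect_le_1) simp
  show "snd p \<le> \<beta>" "snd q \<le> \<beta>"
    using assms(1,2) by (simp_all add: rect_def)
qed (use assms finite_S in simp_all)

lemma rect_rooks_obtain:
  obtains p1 p2 where "S \<inter> rect = {p1, p2}" "snd p1 = j" "fst p2 = i"
proof -
  have "1 \<le> box_count (S \<inter> rect) \<alpha> j"
    using box_count_S_Int_rect[of \<alpha> j] box_count_off_rect[of j \<alpha>] bounds by (simp add: box_ind_def)
  then obtain p1 where p1: "p1 \<in> S \<inter> rect" "snd p1 \<le> j"
    by (rule box_count_pos_obtain)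
  have "1 \<le> box_count (S \<inter> rect) i \<beta>"
    using box_count_S_Int_rect[of i \<beta>] box_count_off_rect[of \<beta> i] bounds by (simp add: box_ind_def)
  then obtain p2 where p2: "p2 \<in> S \<inter> rect" "i \<le> fst p2"
    by (rule box_count_pos_obtain)
  have "snd p1 = j"
    using p1 by (auto simp: rect_def)
  have "fst p2 = i"
    using p2 by (auto simp: rect_def)
  have "q = p1 \<or> q = p2" if q: "q \<in> S \<inter> rect" for q
  proof (cases "snd q < \<alpha>")
    case True
    then show ?thesis
      using rect_rook_unique_left[OF q p1(1)] \<open>snd p1 = j\<close> bounds by simp
  next
    case False
    then show ?thesis
      using rect_rook_left_or_low[OF q] rect_rook_unique_low[OF q p2(1)] \<open>fst p2 = i\<close> bounds by simp
  qed
  then have "S \<inter> rect = {p1, p2}"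
    using p1(1) p2(1) by blast
  then show ?thesis
    using that \<open>snd p1 = j\<close> \<open>fst p2 = i\<close> by blast
qed

lemma S_cases: "S = T \<or> S = D"
proof -
  obtain p1 p2 where s: "S \<inter> rect = {p1, p2}" and p1: "snd p1 = j" and p2: "fst p2 = i"
    using rect_rooks_obtain by blast
  have in_rect: "p1 \<in> S \<inter> rect" "p2 \<in> S \<inter> rect"
    using s by auto
  have S_eq: "S = D - {(i, j)} \<union> {p1, p2}"
    using S_minus_rect D_Int_rect s by blast
  show ?thesis
  proof (cases "p1 = p2")
    case True
    then have "p1 = (i, j)"
      using p1 p2 by (simp add: prod_eq_iff)
    then show ?thesis
      using S_eq True corner by auto
  next
    case False
    have "fst p1 = \<alpha>"
    proof (rule ccontr)
      assume "fst p1 \<noteq> \<alpha>"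
      then have "\<beta> < fst p1"
        using rect_rook_shape(1)[OF in_rect(1)] by simp
      then show False
        using rect_rook_unique_low[OF in_rect] p2 bounds False by simp
    qed
    moreover have "snd p2 = \<beta>"
    proof (rule ccontr)
      assume "snd p2 \<noteq> \<beta>"
      then have "snd p2 < \<alpha>"
        using rect_rook_shape(2)[OF in_rect(2)] by simp
      then show False
        using rect_rook_unique_left[OF in_rect] p1 bounds False by simp
    qed
    ultimately have "p1 = (\<alpha>, j)" "p2 = (i, \<beta>)"
      using p1 p2 by (simp_all add: prod_eq_iff)
    then show ?thesis
      using S_eq by (auto simp: rook_split_def)
  qed
qed

end

lemma (in admissible_split) split_in_Lplus: "T \<in> Lplus n D"
proof -
  have Phi: "T \<subseteq> Phi n" "D \<subseteq> Phi n"
    using rook_Phi rook_T rook_D by auto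
  have "rless n T D"
    using T_box_le_D corner corner_notin_T rleq_iff_box_le[OF Phi] by (auto simp: rless_def)
  moreover have "\<not> (\<exists>S. rook n S \<and> rless n T S \<and> rless n S D)"
  proof
    assume "\<exists>S. rook n S \<and> rless n T S \<and> rless n S D"
    then obtain S where S: "rook n S" "rless n T S" "rless n S D"
      by blast
    then interpret split_between n D i j \<alpha> \<beta> S
      using rleq_iff_box_le[OF Phi(1) rook_Phi] rleq_iff_box_le[OF rook_Phi Phi(2)]
      by unfold_locales (auto simp: rless_def)
    show False
      using S_cases S by (auto simp: rless_def)
  qed
  ultimately show ?thesis
    using rook_T card_T by (simp add: Lplus_def)
qed

lemma Nplus_subset_Lplus: "rook n D \<Longrightarrow> Nplus n D \<subseteq> Lplus n D"
  using admissible_split.split_in_Lplus admissible_split.intro by (fastforce simp: Nplus_eq)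

subsection \<open>Covers of a placement\<close>

locale rook_cover =
  fixes n :: nat and T D :: "(nat \<times> nat) set"
  assumes rook_T: "rook n T" and rook_D: "rook n D"
    and T_le_D: "box_le T D" and T_ne_D: "T \<noteq> D"
    and cover: "\<And>S. rook n S \<Longrightarrow> box_le T S \<Longrightarrow> box_le S D \<Longrightarrow> S \<noteq> T \<Longrightarrow> S = D"

lemma rook_cover_of_Lplus:
  assumes "rook n D" "T \<in> Lplus n D"
  shows "rook_cover n T D"
proof
  show "rook n T" "rook n D"
    using assms by (auto simp: Lplus_def)
  then have Phi: "T \<subseteq> Phi n" "D \<subseteq> Phi n"
    by (auto simp: rook_Phi)
  show "box_le T D" "T \<noteq> D"
    using assms(2) rleq_iff_box_le[OF Phi] by (auto simp: Lplus_def rless_def)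
  show "S = D" if "rook n S" "box_le T S" "box_le S D" "S \<noteq> T" for S
  proof (rule ccontr)
    assume "S \<noteq> D"
    then have "rless n T S" "rless n S D"
      using that rleq_iff_box_le[OF Phi(1) rook_Phi[OF that(1)]]
        rleq_iff_box_le[OF rook_Phi[OF that(1)] Phi(2)]
      by (simp_all add: rless_def)
    then show False
      using assms(2) that(1) by (auto simp: Lplus_def)
  qed
qed

context rook_cover
begin

lemma finite_T: "finite T" and finite_D: "finite D"
  using rook_finite rook_T rook_D by auto

lemma T_Phi: "T \<subseteq> Phi n" and D_Phi: "D \<subseteq> Phi n"
  using rook_Phi rook_T rook_D by auto

definition gap :: "nat \<Rightarrow> nat \<Rightarrow> bool" where
  "gap x y \<longleftrightarrow> y < x \<and> box_count T x y < box_count D x y"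

lemma box_count_eq_if_not_gap: "y < x \<Longrightarrow> \<not> gap x y \<Longrightarrow> box_count T x y = box_count D x y"
  using T_le_D by (auto simp: box_le_def gap_def intro: le_antisym)

lemma exists_gap: "\<exists>x y. gap x y"
proof (rule ccontr)
  assume "\<nexists>x y. gap x y"
  then have "(x, y) \<in> T \<longleftrightarrow> (x, y) \<in> D" for x y
    using box_count_eq_if_not_gap by (intro mem_iff_of_box_counts_eq_below[OF T_Phi D_Phi]) auto
  then show False
    using T_ne_D by auto
qed

lemma lowest_gap_obtain:
  obtains i j where "gap i j" "\<And>x y. gap x y \<Longrightarrow> x \<le> i" "\<And>y. y < j \<Longrightarrow> \<not> gap i y"
proof -
  obtain x0 where "\<exists>y. gap x0 y"
    using exists_gap by blast
  moreover have "\<forall>x. (\<exists>y. gap x y) \<longrightarrow> x \<le> n"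
    using box_count_beyond[OF D_Phi] by (metis gap_def not_le not_less0)
  ultimately have "\<exists>i. (\<exists>y. gap i y) \<and> (\<forall>x. (\<exists>y. gap x y) \<longrightarrow> x \<le> i)"
    by (rule Nat.ex_has_greatest_nat)
  then obtain i where "\<exists>y. gap i y" "\<And>x y. gap x y \<Longrightarrow> x \<le> i"
    by blast
  moreover from this(1) have "gap i (LEAST y. gap i y)"
    by (rule LeastI_ex)
  ultimately show ?thesis
    using that not_less_Least by blast
qed

context
  fixes i j :: nat
  assumes gap_ij: "gap i j" and i_max: "\<And>x y. gap x y \<Longrightarrow> x \<le> i"
    and j_min: "\<And>y. y < j \<Longrightarrow> \<not> gap i y"
begin

lemma agree_below_gap: "i < fst p \<Longrightarrow> p \<in> T \<longleftrightarrow> p \<in> D"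
  using i_max box_count_eq_if_not_gap
  by (cases p) (simp only: fst_conv, intro mem_iff_of_box_counts_eq_below[OF T_Phi D_Phi], fastforce)

lemma gap_corner: "(i, j) \<in> D" "(i, j) \<notin> T"
proof -
  have "1 \<le> j"
  proof (rule ccontr)
    assume "\<not> 1 \<le> j"
    then have "j = 0"
      by simp
    then show False
      using gap_ij box_count_col0[OF D_Phi, of i] by (simp add: gap_def)
  qed
  have "j < i" "box_count T i j < box_count D i j"
    using gap_ij by (simp_all add: gap_def)
  moreover have "\<not> gap (Suc i) j" "\<not> gap (Suc i) (j - 1)" "\<not> gap i (j - 1)"
    using i_max[of "Suc i"] j_min[of "j - 1"] \<open>1 \<le> j\<close> by auto
  ultimately have "box_count T (Suc i) j = box_count D (Suc i) j"
    "box_count T (Suc i) (j - 1) = box_count D (Suc i) (j - 1)"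
    "box_count T i (j - 1) = box_count D i (j - 1)"
    using box_count_eq_if_not_gap by auto
  then have "of_bool ((i, j) \<in> T) < (of_bool ((i, j) \<in> D) :: nat)"
    using box_count_corner[OF finite_T \<open>1 \<le> j\<close>, of i] box_count_corner[OF finite_D \<open>1 \<le> j\<close>, of i]
      \<open>box_count T i j < box_count D i j\<close>
    by linarith
  then show "(i, j) \<in> D" "(i, j) \<notin> T"
    by (auto split: if_splits)
qed

lemma gap_row_right: "(i, b) \<in> T \<Longrightarrow> j < b"
proof (rule ccontr)
  assume ib: "(i, b) \<in> T" and "\<not> j < b"
  moreover have "b \<noteq> j"
    using ib gap_corner(2) by auto
  ultimately have "b < j" "b < i"
    using T_Phi by auto
  have "p = (i, j)" if "p \<in> D" "fst p = i" for p
    using rook_same_row[OF rook_D that(1) gap_corner(1)] that(2) by simp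
  then have "{p \<in> D. fst p = i \<and> snd p \<le> b} = {}"
    using \<open>b < j\<close> by force
  then have "card {p \<in> D. fst p = i \<and> snd p \<le> b} = 0"
    by (simp only: card.empty)
  moreover have "0 < card {p \<in> T. fst p = i \<and> snd p \<le> b}"
    using ib finite_T by (auto simp: card_gt_0_iff)
  moreover have "box_count T (Suc i) b = box_count D (Suc i) b"
    using i_max[of "Suc i" b] \<open>b < i\<close> by (intro box_count_eq_if_not_gap) auto
  ultimately have "box_count D i b < box_count T i b"
    using box_count_row_split[OF finite_T, of i b] box_count_row_split[OF finite_D, of i b]
    by linarith
  moreover have "box_count T i b \<le> box_count D i b"
    using T_le_D \<open>b < i\<close> by (simp add: box_le_def)
  ultimately show False
    by simp
qed

end

end

locale split_cover = rook_cover +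
  fixes i j \<alpha> \<beta> :: nat
  assumes corner: "(i, j) \<in> D" and bounds: "j < \<alpha>" "\<alpha> \<le> \<beta>" "\<beta> < i"
    and row_\<alpha>_free: "\<forall>p\<in>D. fst p \<noteq> \<alpha>" and col_\<beta>_free: "\<forall>p\<in>D. snd p \<noteq> \<beta>"
    and T_eq: "T = rook_split D i j \<alpha> \<beta>"
begin

lemma box_count_T:
  "box_count T x y + box_ind (i, j) x y = box_count D x y + box_ind (i, \<beta>) x y + box_ind (\<alpha>, j) x y"
  unfolding T_eq using box_count_rook_split[OF finite_D corner] bounds row_\<alpha>_free col_\<beta>_free
  by simp

lemma no_larger_split:
  assumes "\<alpha> \<le> \<alpha>'" "\<alpha>' \<le> \<beta>'" "\<beta>' \<le> \<beta>" "(\<alpha>', \<beta>') \<noteq> (\<alpha>, \<beta>)"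
    and free: "\<forall>p\<in>D. fst p \<noteq> \<alpha>'" "\<forall>p\<in>D. snd p \<noteq> \<beta>'"
  shows False
proof -
  let ?S = "rook_split D i j \<alpha>' \<beta>'"
  have bounds': "j < \<alpha>'" "\<alpha>' \<le> \<beta>'" "\<beta>' < i"
    using assms(1-3) bounds by auto
  then have "\<alpha>' < i"
    by simp
  have "rook n ?S"
    by (rule rook_rook_split[OF rook_D corner]) (use bounds' free in auto)
  moreover have "box_le T ?S"
    unfolding box_le_def
  proof (intro allI impI)
    fix x y :: nat assume "y < x"
    have "box_ind (i, \<beta>) x y + box_ind (\<alpha>, j) x y \<le> box_ind (i, \<beta>') x y + box_ind (\<alpha>', j) x y"
      using assms(1-3) by (auto simp: box_ind_def)
    then show "box_count T x y \<le> box_count ?S x y"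
      using box_count_T[of x y] box_count_rook_split[OF finite_D corner \<open>\<alpha>' < i\<close> free, of x y]
      by linarith
  qed
  moreover have "box_le ?S D"
    by (rule box_le_rook_split[OF finite_D corner bounds' free])
  moreover have "?S \<noteq> T"
  proof
    assume "?S = T"
    then have "(\<alpha>', j) \<in> T" "(i, \<beta>') \<in> T"
      by (auto simp: rook_split_def)
    then have "\<alpha>' = \<alpha>" "\<beta>' = \<beta>"
      using free bounds bounds' unfolding T_eq rook_split_def by auto
    then show False
      using assms(4) by simp
  qed
  ultimately have "?S = D"
    by (rule cover)
  moreover have "(i, j) \<notin> ?S"
    using bounds' by (intro corner_notin_rook_split) auto
  ultimately show False
    using corner by simp
qed

lemma row_occupied: "\<alpha> < k \<Longrightarrow> k \<le> \<beta> \<Longrightarrow> \<exists>p\<in>D. fst p = k"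
  using no_larger_split[of k \<beta>] col_\<beta>_free by auto

lemma col_occupied: "\<alpha> \<le> k \<Longrightarrow> k < \<beta> \<Longrightarrow> \<exists>p\<in>D. snd p = k"
  using no_larger_split[of \<alpha> k] row_\<alpha>_free by auto

lemma no_rook_inside:
  assumes cd: "(c, d) \<in> D" "\<alpha> < c" "c \<le> i" "j \<le> d" "d < \<beta>"
  shows "(c, d) = (i, j)"
proof (rule ccontr)
  assume ne: "(c, d) \<noteq> (i, j)"
  then have "c \<noteq> i" "d \<noteq> j"
    using rook_same_row[OF rook_D cd(1) corner] rook_same_col[OF rook_D cd(1) corner] by auto
  let ?S = "rook_swap D i j c d"
  have "rook n ?S"
    using cd bounds \<open>c \<noteq> i\<close> \<open>d \<noteq> j\<close> by (intro rook_rook_swap[OF rook_D corner]) auto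
  moreover have "box_le T ?S"
    unfolding box_le_def
  proof (intro allI impI)
    fix x y :: nat assume "y < x"
    then have "box_ind (i, \<beta>) x y + box_ind (\<alpha>, j) x y + box_ind (c, d) x y
        \<le> box_ind (i, d) x y + box_ind (c, j) x y"
      using cd bounds \<open>c \<noteq> i\<close> by (auto simp: box_ind_def)
    then show "box_count T x y \<le> box_count ?S x y"
      using box_count_T[of x y] box_count_rook_swap[OF rook_D corner cd(1) \<open>c \<noteq> i\<close> \<open>d \<noteq> j\<close>, of x y]
      by linarith
  qed
  moreover have "box_le ?S D"
    using cd \<open>c \<noteq> i\<close> \<open>d \<noteq> j\<close> by (intro box_le_rook_swap[OF rook_D corner]) auto
  moreover have "?S \<noteq> T"
  proof
    assume "?S = T"
    moreover have "(c, d) \<in> T"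
      using cd ne bounds unfolding T_eq rook_split_def by auto
    moreover have "(c, d) \<notin> ?S"
      using \<open>c \<noteq> i\<close> \<open>d \<noteq> j\<close> by (simp add: rook_swap_def)
    ultimately show False
      by simp
  qed
  ultimately have "?S = D"
    by (rule cover)
  moreover have "(i, j) \<notin> ?S"
    using \<open>c \<noteq> i\<close> \<open>d \<noteq> j\<close> by (simp add: rook_swap_def)
  ultimately show False
    using corner by simp
qed

lemma split_admissible: "(\<alpha>, \<beta>) \<in> Cset n D (i, j)"
  unfolding Cset_def
proof (simp only: prod.case mem_Collect_eq, intro conjI allI impI ballI)
  show "\<beta> < i" "\<alpha> \<le> \<beta>" "j < \<alpha>"
    using bounds by auto
  show "D \<inter> rowR n \<alpha> = {}" "D \<inter> colC n \<beta> = {}"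
    using row_\<alpha>_free col_\<beta>_free row_empty_iff[OF D_Phi] col_empty_iff[OF D_Phi] by auto
next
  fix k assume "\<alpha> < k \<and> k < \<beta>"
  then show "D \<inter> rowR n k \<noteq> {}" "D \<inter> colC n k \<noteq> {}"
    using row_occupied[of k] col_occupied[of k] row_empty_iff[OF D_Phi] col_empty_iff[OF D_Phi]
    by auto
next
  assume "\<alpha> \<noteq> \<beta>"
  then show "D \<inter> rowR n \<beta> \<noteq> {}" "D \<inter> colC n \<alpha> \<noteq> {}"
    using row_occupied[of \<beta>] col_occupied[of \<alpha>] bounds row_empty_iff[OF D_Phi] col_empty_iff[OF D_Phi]
    by auto
next
  fix p assume p: "p \<in> D" "pless p (i, j) \<and> \<not> pless p (\<alpha>, j)"
  obtain c d where [simp]: "p = (c, d)"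
    by (cases p)
  have "(c, d) \<in> D" "\<alpha> < c" "c \<le> i" "j \<le> d" "(c, d) \<noteq> (i, j)" "d \<noteq> \<beta>"
    using p row_\<alpha>_free col_\<beta>_free by (auto simp: pless_def pleq_def)
  moreover have "\<beta> \<le> d"
    using no_rook_inside calculation by (meson not_le)
  ultimately show "pless p (i, \<beta>)"
    by (auto simp: pless_def pleq_def)
qed

end

locale cover_corner = rook_cover +
  fixes i j :: nat
  assumes corner_D: "(i, j) \<in> D" and corner_notin_T: "(i, j) \<notin> T"
    and agree_below: "\<And>p. i < fst p \<Longrightarrow> p \<in> T \<longleftrightarrow> p \<in> D"
    and T_row_right: "\<And>b. (i, b) \<in> T \<Longrightarrow> j < b"
begin

lemma corner_bounds: "1 \<le> j" "j < i" "i \<le> n"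
  using corner_D D_Phi by auto

lemma T_col_corner:
  assumes "q \<in> T" "snd q = j"
  shows "fst q < i"
proof (rule ccontr)
  assume "\<not> fst q < i"
  moreover have "q \<noteq> (i, j)"
    using assms(1) corner_notin_T by auto
  ultimately have "i < fst q"
    using assms(2) by (cases q) auto
  then have "q \<in> D"
    using agree_below assms(1) by blast
  then show False
    using rook_same_col[OF rook_D _ corner_D] assms(2) \<open>q \<noteq> (i, j)\<close> by auto
qed

text \<open>Splitting the box at column \<open>j - 1\<close>: in the right part, \<open>T\<close> has only rooks below row
  \<open>i\<close>, which are rooks of \<open>D\<close>, while \<open>D\<close> also has \<open>(i, j)\<close>.\<close>

lemma box_count_lt:
  assumes "y < x" "x \<le> i" "j \<le> y"
    and empty: "\<forall>p\<in>T. \<not> (x \<le> fst p \<and> fst p \<le> i \<and> j \<le> snd p \<and> snd p \<le> y)"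
  shows "box_count T x y < box_count D x y"
proof -
  let ?AT = "{p \<in> T. x \<le> fst p \<and> j - 1 < snd p \<and> snd p \<le> y}"
  let ?AD = "{p \<in> D. x \<le> fst p \<and> j - 1 < snd p \<and> snd p \<le> y}"
  have "?AT \<subseteq> ?AD - {(i, j)}"
  proof
    fix p assume p: "p \<in> ?AT"
    then have "i < fst p"
      using empty corner_bounds(1) by fastforce
    then show "p \<in> ?AD - {(i, j)}"
      using p agree_below by auto
  qed
  then have "card ?AT \<le> card (?AD - {(i, j)})"
    using finite_D by (intro card_mono) auto
  also have "\<dots> < card ?AD"
    using finite_D corner_D assms(2,3) corner_bounds by (intro card_Diff1_less) auto
  finally have "card ?AT < card ?AD" .
  moreover have "box_count T x (j - 1) \<le> box_count D x (j - 1)"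
    using T_le_D assms(1,3) by (simp add: box_le_def)
  ultimately show ?thesis
    using box_count_col_split[OF finite_T, where x = x and y = y and z = "j - 1"]
      box_count_col_split[OF finite_D, where x = x and y = y and z = "j - 1"] assms(3)
    by linarith
qed

text \<open>On the raised boxes \<open>box_count_lt\<close> applies, so \<open>T < S \<le> D\<close>.\<close>

lemma eq_D_of_raise:
  assumes "rook n S" "S \<noteq> T"
    and raise: "\<And>x y. y < x \<Longrightarrow> box_count S x y = box_count T x y + of_bool (R x y)"
    and empty: "\<forall>p\<in>T. a < fst p \<and> fst p \<le> i \<and> j \<le> snd p \<longrightarrow> c \<le> snd p"
    and region: "\<And>x y. y < x \<Longrightarrow> R x y \<Longrightarrow> a < x \<and> x \<le> i \<and> j \<le> y \<and> y < c"
  shows "S = D"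
proof (rule cover[OF assms(1) _ _ assms(2)])
  show "box_le T S"
    using raise by (simp add: box_le_def)
  show "box_le S D"
    unfolding box_le_def
  proof (intro allI impI)
    fix x y :: nat assume "y < x"
    show "box_count S x y \<le> box_count D x y"
    proof (cases "R x y")
      case True
      then have "a < x" "x \<le> i" "j \<le> y" "y < c"
        using region \<open>y < x\<close> by auto
      then have "box_count T x y < box_count D x y"
        using \<open>y < x\<close> empty by (intro box_count_lt) auto
      then show ?thesis
        using raise[OF \<open>y < x\<close>] True by simp
    next
      case False
      then show ?thesis
        using raise[OF \<open>y < x\<close>] T_le_D \<open>y < x\<close> by (simp add: box_le_def)
    qed
  qed
qed

lemma lowest_rook_above_obtain:
  assumes "\<exists>p\<in>T. fst p < i \<and> j \<le> snd p \<and> snd p < c"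
  obtains a b where "(a, b) \<in> T" "a < i" "j \<le> b" "b < c"
    "\<forall>p\<in>T. a < fst p \<and> fst p < i \<and> j \<le> snd p \<longrightarrow> c \<le> snd p"
proof -
  let ?P = "\<lambda>a. \<exists>b. (a, b) \<in> T \<and> a < i \<and> j \<le> b \<and> b < c"
  obtain a0 where "?P a0"
    using assms by (metis prod.collapse)
  moreover have "\<forall>a. ?P a \<longrightarrow> a \<le> i"
    by auto
  ultimately have "\<exists>a. ?P a \<and> (\<forall>a'. ?P a' \<longrightarrow> a' \<le> a)"
    by (rule Nat.ex_has_greatest_nat)
  then obtain a b where "(a, b) \<in> T" "a < i" "j \<le> b" "b < c" and a_max: "\<And>a'. ?P a' \<Longrightarrow> a' \<le> a"
    by blast
  moreover have "\<forall>p\<in>T. a < fst p \<and> fst p < i \<and> j \<le> snd p \<longrightarrow> c \<le> snd p"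
    using a_max by (metis not_le prod.collapse)
  ultimately show ?thesis
    using that by blast
qed

lemma T_row_unique: "(i, b) \<in> T \<Longrightarrow> (i, b') \<in> T \<Longrightarrow> b' = b"
  using rook_same_row[OF rook_T] by fastforce

lemma T_col_unique: "(a, b) \<in> T \<Longrightarrow> (a', b) \<in> T \<Longrightarrow> a' = a"
  using rook_same_col[OF rook_T] by fastforce

lemma merge_eq_D:
  assumes i\<beta>: "(i, \<beta>) \<in> T" and ab: "(a, b) \<in> T" "a < i" "j \<le> b" "b < \<beta>" "a \<le> \<beta>"
    and free: "\<forall>p\<in>T. a < fst p \<and> fst p < i \<and> j \<le> snd p \<longrightarrow> \<beta> \<le> snd p"
  shows "insert (i, b) (T - {(i, \<beta>), (a, b)}) = D"
proof -
  let ?R = "T - {(i, \<beta>), (a, b)}"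
  have "\<beta> < i"
    using i\<beta> T_Phi by auto
  have ib: "(i, b) \<notin> T"
    using T_row_unique[OF i\<beta>] ab(4) by blast
  have "fst q \<noteq> i \<and> snd q \<noteq> b" if "q \<in> ?R" for q
    using that rook_same_row[OF rook_T _ i\<beta>, of q] rook_same_col[OF rook_T _ ab(1), of q] by auto
  then have "rook n (insert (i, b) ?R)"
    using rook_subset[OF rook_T, of ?R] \<open>\<beta> < i\<close> ab(3,4,5) corner_bounds
    by (intro rook_insert) auto
  moreover have "insert (i, b) ?R \<noteq> T"
    using ib by auto
  moreover have "box_count (insert (i, b) ?R) x y
      = box_count T x y + of_bool (a < x \<and> x \<le> i \<and> b \<le> y \<and> y < \<beta>)" if "y < x" for x y
  proof -
    have "box_count (?R \<union> {(i, b)}) x y + box_count {(i, \<beta>), (a, b)} x y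
        = box_count T x y + box_count {(i, b)} x y"
      using finite_T i\<beta> ab ib by (intro box_count_exchange) auto
    moreover have "box_ind (i, b) x y
        = box_ind (i, \<beta>) x y + box_ind (a, b) x y + of_bool (a < x \<and> x \<le> i \<and> b \<le> y \<and> y < \<beta>)"
      using that ab(2,4,5) by (auto simp: box_ind_def)
    ultimately show ?thesis
      using ab(2) by simp
  qed
  moreover have "\<forall>p\<in>T. a < fst p \<and> fst p \<le> i \<and> j \<le> snd p \<longrightarrow> \<beta> \<le> snd p"
    using free T_row_unique[OF i\<beta>] by (metis le_neq_implies_less order_refl prod.collapse)
  ultimately show ?thesis
    by (rule eq_D_of_raise) (use ab in auto)
qed

text \<open>Merging \<open>(i, \<beta>)\<close> and \<open>(a, b)\<close> gives \<open>D\<close>, so \<open>T\<close> splits \<open>(i, j)\<close>; being a cover, it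
  splits it admissibly.\<close>

lemma Nplus_of_merge:
  assumes i\<beta>: "(i, \<beta>) \<in> T" and ab: "(a, b) \<in> T" "a < i" "j \<le> b" "b < \<beta>" "a \<le> \<beta>"
    and free: "\<forall>p\<in>T. a < fst p \<and> fst p < i \<and> j \<le> snd p \<longrightarrow> \<beta> \<le> snd p"
  shows "T \<in> Nplus n D"
proof -
  have SD: "D = insert (i, b) (T - {(i, \<beta>), (a, b)})"
    using merge_eq_D[OF assms] by simp
  then have "b = j"
    using corner_D corner_notin_T by auto
  interpret split_cover n T D i j a \<beta>
  proof
    show "(i, j) \<in> D" "j < a" "a \<le> \<beta>" "\<beta> < i"
      using corner_D \<open>b = j\<close> ab i\<beta> T_Phi by auto
    show "\<forall>p\<in>D. fst p \<noteq> a" "\<forall>p\<in>D. snd p \<noteq> \<beta>"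
      using SD rook_same_row[OF rook_T _ ab(1)] rook_same_col[OF rook_T _ i\<beta>] ab(2,4) by auto
    show "T = rook_split D i j a \<beta>"
      using SD i\<beta> ab(1) \<open>b = j\<close> corner_notin_T by (auto simp: rook_split_def)
  qed
  show ?thesis
    using split_admissible corner_D T_eq by (auto simp: Nplus_eq)
qed

lemma card_le_of_swap:
  assumes i\<beta>: "(i, \<beta>) \<in> T" and ab: "(a, b) \<in> T" "a < i" "j \<le> b" "b < \<beta>" "\<beta> < a"
    and free: "\<forall>p\<in>T. a < fst p \<and> fst p < i \<and> j \<le> snd p \<longrightarrow> \<beta> \<le> snd p"
  shows "card T \<le> card D"
proof -
  let ?S = "rook_swap T i \<beta> a b"
  have "b < i" "a \<noteq> i" "b \<noteq> \<beta>"
    using ab by auto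
  have "rook n ?S"
    using rook_rook_swap[OF rook_T i\<beta> ab(1)] ab \<open>b < i\<close> by auto
  moreover have "?S \<noteq> T"
    using T_row_unique[OF i\<beta>, of b] \<open>b \<noteq> \<beta>\<close> by (auto simp: rook_swap_def)
  moreover have "box_count ?S x y = box_count T x y + of_bool (a < x \<and> x \<le> i \<and> b \<le> y \<and> y < \<beta>)"
    if "y < x" for x y
  proof -
    have "box_ind (i, b) x y + box_ind (a, \<beta>) x y
        = box_ind (i, \<beta>) x y + box_ind (a, b) x y + of_bool (a < x \<and> x \<le> i \<and> b \<le> y \<and> y < \<beta>)"
      using ab(2,4) by (auto simp: box_ind_def)
    then show ?thesis
      using box_count_rook_swap[OF rook_T i\<beta> ab(1) \<open>a \<noteq> i\<close> \<open>b \<noteq> \<beta>\<close>, of x y] by linarith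
  qed
  moreover have "\<forall>p\<in>T. a < fst p \<and> fst p \<le> i \<and> j \<le> snd p \<longrightarrow> \<beta> \<le> snd p"
    using free T_row_unique[OF i\<beta>] by (metis le_neq_implies_less order_refl prod.collapse)
  ultimately have "?S = D"
    by (rule eq_D_of_raise) (use ab in auto)
  then show ?thesis
    using card_rook_swap[OF rook_T i\<beta> ab(1) \<open>a \<noteq> i\<close> \<open>b \<noteq> \<beta>\<close>] by simp
qed

lemma card_le_of_row_move:
  assumes i\<beta>: "(i, \<beta>) \<in> T"
    and free: "\<forall>p\<in>T. fst p < i \<and> j \<le> snd p \<longrightarrow> \<beta> \<le> snd p"
  shows "card T \<le> card D"
proof -
  let ?S = "insert (i, j) (T - {(i, \<beta>)})"
  have "j < \<beta>"
    using T_row_right[OF i\<beta>] .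
  have "fst q \<noteq> i \<and> snd q \<noteq> j" if "q \<in> T - {(i, \<beta>)}" for q
    using that T_row_unique[OF i\<beta>] free T_col_corner \<open>j < \<beta>\<close> by (cases q) fastforce
  then have "rook n ?S"
    using rook_subset[OF rook_T, of "T - {(i, \<beta>)}"] corner_D D_Phi by (intro rook_insert) auto
  moreover have "?S \<noteq> T"
    using corner_notin_T by auto
  moreover have "box_count ?S x y = box_count T x y + of_bool (x \<le> i \<and> j \<le> y \<and> y < \<beta>)"
    for x y
  proof -
    have "box_count (T - {(i, \<beta>)} \<union> {(i, j)}) x y + box_count {(i, \<beta>)} x y
        = box_count T x y + box_count {(i, j)} x y"
      using finite_T i\<beta> corner_notin_T by (intro box_count_exchange) auto
    moreover have "box_ind (i, j) x y = box_ind (i, \<beta>) x y + of_bool (x \<le> i \<and> j \<le> y \<and> y < \<beta>)"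
      using \<open>j < \<beta>\<close> by (auto simp: box_ind_def)
    ultimately show ?thesis
      by simp
  qed
  moreover have "\<forall>p\<in>T. 0 < fst p \<and> fst p \<le> i \<and> j \<le> snd p \<longrightarrow> \<beta> \<le> snd p"
    using free T_row_unique[OF i\<beta>] by (metis le_neq_implies_less order_refl prod.collapse)
  ultimately have "?S = D"
    by (rule eq_D_of_raise) auto
  moreover have "card ?S = card T"
    using finite_T i\<beta> corner_notin_T card_gt_0_iff[of T] by (auto simp: card_insert_if)
  ultimately show ?thesis
    by simp
qed

lemma card_le_of_col_move:
  assumes row_free: "\<forall>b. (i, b) \<notin> T" and ab: "(a, b) \<in> T" "a < i" "j \<le> b"
    and free: "\<forall>p\<in>T. a < fst p \<and> fst p < i \<and> j \<le> snd p \<longrightarrow> i \<le> snd p"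
  shows "card T \<le> card D"
proof -
  let ?S = "insert (i, b) (T - {(a, b)})"
  have "b < a"
    using ab T_Phi by auto
  have "fst q \<noteq> i \<and> snd q \<noteq> b" if "q \<in> T - {(a, b)}" for q
    using that row_free T_col_unique[OF ab(1)] by (cases q) auto
  then have "rook n ?S"
    using rook_subset[OF rook_T, of "T - {(a, b)}"] \<open>b < a\<close> ab corner_bounds
    by (intro rook_insert) auto
  moreover have "?S \<noteq> T"
    using row_free by auto
  moreover have "box_count ?S x y = box_count T x y + of_bool (a < x \<and> x \<le> i \<and> b \<le> y)" for x y
  proof -
    have "box_count (T - {(a, b)} \<union> {(i, b)}) x y + box_count {(a, b)} x y
        = box_count T x y + box_count {(i, b)} x y"
      using finite_T ab row_free by (intro box_count_exchange) auto
    moreover have "box_ind (i, b) x y = box_ind (a, b) x y + of_bool (a < x \<and> x \<le> i \<and> b \<le> y)"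
      using ab(2) by (auto simp: box_ind_def)
    ultimately show ?thesis
      by simp
  qed
  moreover have "\<forall>p\<in>T. a < fst p \<and> fst p \<le> i \<and> j \<le> snd p \<longrightarrow> i \<le> snd p"
    using free row_free by (metis le_neq_implies_less prod.collapse)
  ultimately have "?S = D"
    by (rule eq_D_of_raise) (use ab in auto)
  moreover have "card ?S = card T"
    using finite_T ab row_free card_gt_0_iff[of T] by (auto simp: card_insert_if)
  ultimately show ?thesis
    by simp
qed

lemma card_le_of_insert:
  assumes row_free: "\<forall>b. (i, b) \<notin> T" and free: "\<forall>p\<in>T. fst p < i \<longrightarrow> snd p < j"
  shows "card T \<le> card D"
proof -
  let ?S = "insert (i, j) T"
  have "fst q \<noteq> i \<and> snd q \<noteq> j" if "q \<in> T" for q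
    using that row_free T_col_corner free by (cases q) fastforce
  then have "rook n ?S"
    using corner_D D_Phi by (intro rook_insert[OF rook_T]) auto
  moreover have "?S \<noteq> T"
    using corner_notin_T by auto
  moreover have "box_count ?S x y = box_count T x y + of_bool (x \<le> i \<and> j \<le> y)" for x y
    using finite_T corner_notin_T by (simp add: box_ind_def)
  moreover have "\<forall>p\<in>T. 0 < fst p \<and> fst p \<le> i \<and> j \<le> snd p \<longrightarrow> i \<le> snd p"
    using free row_free by (metis le_neq_implies_less not_le prod.collapse)
  ultimately have "?S = D"
    by (rule eq_D_of_raise) auto
  moreover have "card ?S = Suc (card T)"
    using finite_T corner_notin_T by simp
  ultimately show ?thesis
    by simp
qed

lemma Nplus_of_card_less:
  assumes "card D < card T"
  shows "T \<in> Nplus n D"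
proof (cases "\<exists>\<beta>. (i, \<beta>) \<in> T")
  case True
  then obtain \<beta> where i\<beta>: "(i, \<beta>) \<in> T" ..
  show ?thesis
  proof (cases "\<exists>p\<in>T. fst p < i \<and> j \<le> snd p \<and> snd p < \<beta>")
    case True
    then obtain a b where ab: "(a, b) \<in> T" "a < i" "j \<le> b" "b < \<beta>"
      and free: "\<forall>p\<in>T. a < fst p \<and> fst p < i \<and> j \<le> snd p \<longrightarrow> \<beta> \<le> snd p"
      by (rule lowest_rook_above_obtain)
    show ?thesis
    proof (cases "a \<le> \<beta>")
      case True
      show ?thesis using Nplus_of_merge[OF i\<beta> ab True free] .
    next
      case False
      then show ?thesis using card_le_of_swap[OF i\<beta> ab _ free] assms by simp
    qed
  next
    case False
    then have "card T \<le> card D"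
      by (intro card_le_of_row_move[OF i\<beta>]) auto
    then show ?thesis
      using assms by simp
  qed
next
  case False
  then have row_free: "\<forall>b. (i, b) \<notin> T"
    by blast
  have "\<exists>p\<in>T. fst p < i \<and> j \<le> snd p \<and> snd p < i"
  proof (rule ccontr)
    assume "\<not> ?thesis"
    then have "\<forall>p\<in>T. fst p < i \<longrightarrow> snd p < j"
      using T_Phi by fastforce
    then show False
      using card_le_of_insert[OF row_free] assms by simp
  qed
  then obtain a b where ab: "(a, b) \<in> T" "a < i" "j \<le> b"
    and free: "\<forall>p\<in>T. a < fst p \<and> fst p < i \<and> j \<le> snd p \<longrightarrow> i \<le> snd p"
    by (rule lowest_rook_above_obtain) blast
  then show ?thesis
    using card_le_of_col_move[OF row_free ab free] assms by simp
qed

end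

lemma (in rook_cover) Nplus_of_card_less:
  assumes "card D < card T"
  shows "T \<in> Nplus n D"
proof -
  obtain i j where gap: "gap i j" "\<And>x y. gap x y \<Longrightarrow> x \<le> i" "\<And>y. y < j \<Longrightarrow> \<not> gap i y"
    using lowest_gap_obtain by blast
  interpret cover_corner n T D i j
    using gap_corner[OF gap] agree_below_gap[OF gap] gap_row_right[OF gap] by unfold_locales
  show ?thesis
    using Nplus_of_card_less assms .
qed

lemma Lplus_subset_Nplus: "rook n D \<Longrightarrow> Lplus n D \<subseteq> Nplus n D"
proof
  fix T assume "rook n D" "T \<in> Lplus n D"
  then show "T \<in> Nplus n D"
    using rook_cover.Nplus_of_card_less[OF rook_cover_of_Lplus] by (simp add: Lplus_def)
qed

theorem lemma3p10:
  fixes n :: nat and D :: "(nat \<times> nat) set"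
  assumes "1 \<le> n" and "rook n D"
  shows "Lplus n D = Nplus n D"
  using Lplus_subset_Nplus[OF assms(2)] Nplus_subset_Lplus[OF assms(2)] by (rule subset_antisym)

end
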